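(* Let $\mu$ be a conjugation-symmetric probability Borel measure on $\mathbb T$ with infinite support, $\Phi_i$ its monic orthogonal polynomials, $\varphi_i=\kappa_i\Phi_i$ its orthonormal polynomials ($\kappa_i>0$), $\Phi_i^*(z)=z^i\Phi_i(1/z)$, $\varphi_n^*(z)=z^n\varphi_n(1/z)$, $b_n=\varphi_n/\varphi_n^*$, $K_n(z,w)=\sum_{i=0}^{n-1}\varphi_i(z)\overline{\varphi_i(w)}$, and $h_n(z)=\frac{(1-z^2)b_n'(z)}{1-b_n^2(z)}$. For $|\beta|=1$ let $\Phi_n(z;\beta):=z\Phi_{n-1}(z)-\beta\Phi_{n-1}^*(z)$ be the $n$-th paraorthogonal polynomial, and let $\zeta_{1,n},\dots,\zeta_{n,n}\in\mathbb T$ be the zeros of $\Phi_n(z;1)$. Then $$h_n(z)=\frac{1-z^2}{2}\frac{F_n'(z)}{F_n(z)},$$ where $F_n$ is a trivial Carathéodory function given by $$F_n(z)=-\frac{\Phi_n(z;-1)}{\Phi_n(z;1)}=\int\frac{\zeta+z}{\zeta-z}\,d\sigma_n(\zeta),$$ and $\sigma_n$ is the probability measure $$\sigma_n=\sum_{k=1}^n\frac{|\varphi_{n-1}(\zeta_{k,n})|^2}{K_n(\zeta_{k,n},\zeta_{k,n})}\delta_{\zeta_{k,n}},$$ $\delta_\zeta$ denoting the unit point mass at $\zeta$.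
   Context: A trivial Carathéodory function is one of the form $\int\frac{\zeta+z}{\zeta-z}d\sigma(\zeta)$ with $\sigma$ a probability measure on $\mathbb T$ supported on finitely many points. *)

theory Defs
  imports "HOL-Probability.Probability" "HOL-Computational_Algebra.Polynomial"
begin

definition msupport :: "complex measure \<Rightarrow> complex set" where
  "msupport \<mu> = {z. \<forall>e>0. emeasure \<mu> (ball z e) > 0}"

definition is_monic_OP :: "complex measure \<Rightarrow> nat \<Rightarrow> complex poly \<Rightarrow> bool" where
  "is_monic_OP \<mu> n p \<longleftrightarrow> degree p = n \<and> lead_coeff p = 1 \<and>
     (\<forall>k<n. (LINT z|\<mu>. poly p z * cnj z ^ k) = 0)"

definition mOP :: "complex measure \<Rightarrow> nat \<Rightarrow> complex poly" where
  "mOP \<mu> n = (THE p. is_monic_OP \<mu> n p)"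

definition kappa :: "complex measure \<Rightarrow> nat \<Rightarrow> real" where
  "kappa \<mu> n = 1 / sqrt (LINT z|\<mu>. (cmod (poly (mOP \<mu> n) z))\<^sup>2)"

definition oOP :: "complex measure \<Rightarrow> nat \<Rightarrow> complex poly" where
  "oOP \<mu> n = smult (complex_of_real (kappa \<mu> n)) (mOP \<mu> n)"

text \<open>Reversed polynomial of order n: evaluates to z^n p(1/z) for z nonzero.\<close>
definition star_poly :: "nat \<Rightarrow> complex poly \<Rightarrow> complex poly" where
  "star_poly n p = (\<Sum>k\<le>n. monom (coeff p (n - k)) k)"

definition bfun :: "complex measure \<Rightarrow> nat \<Rightarrow> complex \<Rightarrow> complex" where
  "bfun \<mu> n z = poly (oOP \<mu> n) z / poly (star_poly n (oOP \<mu> n)) z"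

definition Kker :: "complex measure \<Rightarrow> nat \<Rightarrow> complex \<Rightarrow> complex \<Rightarrow> complex" where
  "Kker \<mu> n z w = (\<Sum>i<n. poly (oOP \<mu> i) z * cnj (poly (oOP \<mu> i) w))"

definition hfun :: "complex measure \<Rightarrow> nat \<Rightarrow> complex \<Rightarrow> complex" where
  "hfun \<mu> n z = (1 - z\<^sup>2) * deriv (bfun \<mu> n) z / (1 - (bfun \<mu> n z)\<^sup>2)"

definition POP :: "complex measure \<Rightarrow> nat \<Rightarrow> complex \<Rightarrow> complex poly" where
  "POP \<mu> n \<beta> = [:0, 1:] * mOP \<mu> (n - 1) - smult \<beta> (star_poly (n - 1) (mOP \<mu> (n - 1)))"

definition Ffun :: "complex measure \<Rightarrow> nat \<Rightarrow> complex \<Rightarrow> complex" where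
  "Ffun \<mu> n z = - poly (POP \<mu> n (-1)) z / poly (POP \<mu> n 1) z"

definition sigma_wt :: "complex measure \<Rightarrow> nat \<Rightarrow> complex \<Rightarrow> real" where
  "sigma_wt \<mu> n \<zeta> = (cmod (poly (oOP \<mu> (n - 1)) \<zeta>))\<^sup>2 / Re (Kker \<mu> n \<zeta> \<zeta>)"

end

theory Submission
  imports Defs "HOL-Computational_Algebra.Fundamental_Theorem_Algebra"
begin

text \<open>
  For a conjugation-symmetric measure the Szego recursion \<open>\<Phi>\<^sub>k\<^sub>+\<^sub>1 = z \<Phi>\<^sub>k - \<alpha>\<^sub>k \<Phi>\<^sub>k\<^sup>*\<close> has real
  coefficients \<open>\<alpha>\<^sub>k \<in> (-1, 1)\<close>, and the Christoffel-Darboux formula for \<open>K\<^sub>n\<close> gives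
  \<open>|z \<Phi>\<^sub>n\<^sub>-\<^sub>1(z)| < |\<Phi>\<^sub>n\<^sub>-\<^sub>1\<^sup>*(z)|\<close> in the disk. Hence \<open>\<Phi>\<^sub>n(z;1)\<close>, which is its own reversal up to
  sign, has all its zeros on the circle, and at a zero \<open>\<zeta>\<close> the same formula identifies
  \<open>\<Phi>\<^sub>n'(\<zeta>;1)\<close> with a nonzero multiple of \<open>K\<^sub>n(\<zeta>,\<zeta>) > 0\<close>, so the \<open>n\<close> zeros are simple.
  Lagrange interpolation of \<open>\<Phi>\<^sub>n\<^sub>-\<^sub>1\<^sup>*\<close> at these zeros is the partial fraction expansion of
  \<open>F\<^sub>n = (\<Phi>\<^sub>n\<^sub>-\<^sub>1\<^sup>* + z \<Phi>\<^sub>n\<^sub>-\<^sub>1) / (\<Phi>\<^sub>n\<^sub>-\<^sub>1\<^sup>* - z \<Phi>\<^sub>n\<^sub>-\<^sub>1)\<close>, with exactly the masses of \<open>\<sigma>\<^sub>n\<close>; they sum to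
  \<open>1\<close> by evaluation at \<open>0\<close>. Finally \<open>b\<^sub>n\<close> and \<open>F\<^sub>n\<close> are Moebius transforms of the same function
  \<open>t = z \<Phi>\<^sub>n\<^sub>-\<^sub>1 / \<Phi>\<^sub>n\<^sub>-\<^sub>1\<^sup>*\<close>, which yields the formula for \<open>h\<^sub>n\<close>.
\<close>

lemma coeff_star_poly:
  "coeff (star_poly k p) j = (if j \<le> k then coeff p (k - j) else 0)"
  unfolding star_poly_def by (auto simp: coeff_sum coeff_monom)

lemma degree_star_poly_le: "degree (star_poly k p) \<le> k"
  by (rule degree_le) (auto simp: coeff_star_poly)

lemma coeff_0_star_poly: "coeff (star_poly k p) 0 = coeff p k"
  by (simp add: coeff_star_poly)

lemma star_poly_diff: "star_poly k (p - q) = star_poly k p - star_poly k q"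
  by (rule poly_eqI) (simp add: coeff_star_poly)

lemma star_poly_smult: "star_poly k (smult c p) = smult c (star_poly k p)"
  by (rule poly_eqI) (simp add: coeff_star_poly)

lemma star_poly_Suc_pCons_0: "star_poly (Suc k) (pCons 0 p) = star_poly k p"
  by (rule poly_eqI) (auto simp: coeff_star_poly coeff_pCons Suc_diff_le split: nat.split)

lemma star_poly_Suc:
  assumes "degree p \<le> k"
  shows "star_poly (Suc k) p = pCons 0 (star_poly k p)"
  by (rule poly_eqI)
    (use assms in \<open>auto simp: coeff_star_poly coeff_pCons coeff_eq_0 split: nat.split\<close>)

lemma star_poly_star_poly: "degree p \<le> k \<Longrightarrow> star_poly k (star_poly k p) = p"
  by (rule poly_eqI) (auto simp: coeff_star_poly coeff_eq_0)

lemma poly_star_poly: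
  fixes z :: complex
  assumes "z \<noteq> 0" "degree p \<le> k"
  shows "poly (star_poly k p) z = z ^ k * poly p (1 / z)"
proof -
  have "poly (star_poly k p) z = (\<Sum>j\<le>k. coeff p (k - j) * z ^ j)"
    unfolding star_poly_def by (simp add: poly_sum poly_monom)
  also have "\<dots> = (\<Sum>i\<le>k. coeff p i * z ^ (k - i))"
    by (rule sum.reindex_bij_witness[of _ "\<lambda>i. k - i" "\<lambda>i. k - i"]) auto
  also have "\<dots> = z ^ k * (\<Sum>i\<le>k. coeff p i * (1 / z) ^ i)"
    unfolding sum_distrib_left
    by (intro sum.cong refl) (use assms in \<open>auto simp: power_diff power_one_over\<close>)
  also have "\<dots> = z ^ k * poly p (1 / z)"
    unfolding poly_altdef using assms(2)
    by (intro arg_cong[where f = "(*) _"] sum.mono_neutral_right) (auto simp: coeff_eq_0)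
  finally show ?thesis .
qed

definition has_real_coeffs :: "complex poly \<Rightarrow> bool" where
  "has_real_coeffs p \<longleftrightarrow> (\<forall>i. cnj (coeff p i) = coeff p i)"

lemma poly_cnj_real_coeffs: "has_real_coeffs p \<Longrightarrow> poly p (cnj z) = cnj (poly p z)"
  unfolding has_real_coeffs_def poly_altdef by simp

lemma has_real_coeffs_1: "has_real_coeffs 1"
  unfolding has_real_coeffs_def by (simp add: coeff_1)

lemma has_real_coeffs_szego_step:
  assumes "has_real_coeffs p" "cnj c = c"
  shows "has_real_coeffs (pCons 0 p - smult c (star_poly k p))"
  using assms unfolding has_real_coeffs_def
  by (simp add: coeff_pCons coeff_star_poly split: nat.split)

lemma poly_star_poly_on_circle:
  fixes z :: complex
  assumes "cmod z = 1" "degree p \<le> k" "has_real_coeffs p"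
  shows "poly (star_poly k p) z = z ^ k * cnj (poly p z)"
proof -
  have "z \<noteq> 0" using assms by auto
  moreover have "1 / z = cnj z"
    using complex_norm_square[of z] assms \<open>z \<noteq> 0\<close> by (simp add: field_simps)
  ultimately show ?thesis using poly_star_poly[of z p k] assms poly_cnj_real_coeffs[of p z] by simp
qed

lemma lagrange_interpolation:
  fixes p :: "complex poly" and Z :: "complex set"
  assumes fin: "finite Z" and deg: "degree p < card Z"
  shows "poly p z = (\<Sum>\<zeta>\<in>Z. poly p \<zeta> / (\<Prod>j\<in>Z-{\<zeta>}. \<zeta> - j) * (\<Prod>j\<in>Z-{\<zeta>}. z - j))"
proof -
  define c where "c \<zeta> = poly p \<zeta> / (\<Prod>j\<in>Z-{\<zeta>}. \<zeta> - j)" for \<zeta>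
  define L where "L = (\<Sum>\<zeta>\<in>Z. smult (c \<zeta>) (\<Prod>j\<in>Z-{\<zeta>}. [:-j,1:]))"
  have poly_L: "poly L z = (\<Sum>\<zeta>\<in>Z. c \<zeta> * (\<Prod>j\<in>Z-{\<zeta>}. z - j))" for z
    unfolding L_def by (simp add: poly_sum poly_prod)
  have "degree L \<le> card Z - 1"
    unfolding L_def
  proof (rule degree_sum_le[OF fin])
    fix \<zeta> assume "\<zeta> \<in> Z"
    have "degree (\<Prod>j\<in>Z-{\<zeta>}. [:-j,1:]) = (\<Sum>j\<in>Z-{\<zeta>}. degree [:-j,1::complex:])"
      by (rule degree_prod_sum_eq) auto
    also have "\<dots> = card Z - 1" using fin \<open>\<zeta> \<in> Z\<close> by simp
    finally show "degree (smult (c \<zeta>) (\<Prod>j\<in>Z-{\<zeta>}. [:-j,1:])) \<le> card Z - 1"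
      by (metis degree_smult_le le_trans)
  qed
  have L_interpolates: "poly L \<eta> = poly p \<eta>" if "\<eta> \<in> Z" for \<eta>
  proof -
    have "(\<Sum>\<zeta>\<in>Z-{\<eta>}. c \<zeta> * (\<Prod>j\<in>Z-{\<zeta>}. \<eta> - j)) = 0"
      using fin that by (intro sum.neutral ballI mult_eq_0_iff[THEN iffD2] disjI2 prod_zero) auto
    moreover have "(\<Prod>j\<in>Z-{\<eta>}. \<eta> - j) \<noteq> 0" using fin by (subst prod_zero_iff) auto
    moreover have "poly L \<eta> = c \<eta> * (\<Prod>j\<in>Z-{\<eta>}. \<eta> - j) + (\<Sum>\<zeta>\<in>Z-{\<eta>}. c \<zeta> * (\<Prod>j\<in>Z-{\<zeta>}. \<eta> - j))"
      unfolding poly_L by (rule sum.remove[OF fin that])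
    ultimately show ?thesis unfolding c_def by simp
  qed
  have "p - L = 0"
  proof (rule ccontr)
    assume nz: "p - L \<noteq> 0"
    have "Z \<subseteq> {x. poly (p - L) x = 0}" using L_interpolates by auto
    hence "card Z \<le> card {x. poly (p - L) x = 0}"
      using poly_roots_finite[OF nz] by (rule card_mono[rotated])
    also have "\<dots> \<le> degree (p - L)" by (rule card_poly_roots_bound[OF nz])
    also have "\<dots> \<le> max (degree p) (degree L)" by (rule degree_diff_le_max)
    also have "\<dots> < card Z" using deg \<open>degree L \<le> card Z - 1\<close> by auto
    finally show False by simp
  qed
  hence "poly p z = poly L z" by simp
  thus ?thesis unfolding poly_L c_def .
qed

text \<open>With \<open>t = B / A\<close>, the functions \<open>b = (t - c) / (1 - c t)\<close> and \<open>F = (1 + t) / (1 - t)\<close>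
  satisfy \<open>b' / (1 - b\<^sup>2) = t' / (1 - t\<^sup>2) = F' / (2 F)\<close>; here this is written out in terms of
  \<open>A, B\<close> and their derivatives \<open>A', B'\<close>.\<close>

lemma moebius_cayley_log_deriv_identity:
  fixes A B A' B' c w :: complex
  assumes "A - c*B \<noteq> 0" "A - B \<noteq> 0" "A + B \<noteq> 0" "c*c \<noteq> 1"
  shows "w * (((B'-c*A')*(A-c*B) - (B-c*A)*(A'-c*B')) / ((A-c*B)*(A-c*B))) / (1 - ((B-c*A)/(A-c*B))\<^sup>2)
       = w / 2 * (((A'+B')*(A-B) - (A+B)*(A'-B')) / ((A-B)*(A-B))) / ((A+B)/(A-B))"
    (is "w * ?db / ?den = w / 2 * ?dF / ?F")
proof -
  define W where "W = (B'*A - B*A') / ((A-B)*(A+B))"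
  have cancel: "k*X/Y / (k*V/Y) = X/V" if "k \<noteq> 0" "Y \<noteq> 0" "V \<noteq> 0" for k X Y V :: complex
    using that by (simp add: field_simps)
  have one_minus_sq: "1 - (N/D)\<^sup>2 = (D*D - N*N) / (D*D)" if "D \<noteq> 0" for N D :: complex
    using that by (simp add: field_simps power2_eq_square)
  have "1 - ((B-c*A)/(A-c*B))\<^sup>2 = ((A-c*B)*(A-c*B) - (B-c*A)*(B-c*A)) / ((A-c*B)*(A-c*B))"
    using one_minus_sq assms(1) .
  also have "(A-c*B)*(A-c*B) - (B-c*A)*(B-c*A) = (1 - c*c)*((A-B)*(A+B))" by algebra
  finally have den: "?den = (1 - c*c)*((A-B)*(A+B)) / ((A-c*B)*(A-c*B))" .
  have "(B'-c*A')*(A-c*B) - (B-c*A)*(A'-c*B') = (1 - c*c) * (B'*A - B*A')" by algebra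
  hence b_part: "?db / ?den = W"
    unfolding den W_def by (simp only:) (rule cancel, use assms in auto)
  have "(A'+B')*(A-B) - (A+B)*(A'-B') = 2*(B'*A - B*A')" by algebra
  hence F_part: "?dF / ?F = 2 * W"
    unfolding W_def using assms(2,3) by (simp add: divide_divide_eq_right)
  have "w * ?db / ?den = w * W" using b_part by (metis times_divide_eq_right)
  also have "\<dots> = w / 2 * (2 * W)" by simp
  also have "\<dots> = w / 2 * ?dF / ?F" using F_part by (metis times_divide_eq_right)
  finally show ?thesis .
qed

lemma deriv_poly_quotient:
  fixes p q :: "complex poly"
  assumes "poly q z \<noteq> 0"
  shows "deriv (\<lambda>u. poly p u / poly q u) z =
    (poly (pderiv p) z * poly q z - poly p z * poly (pderiv q) z) / (poly q z * poly q z)"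
  by (rule DERIV_imp_deriv) (rule DERIV_divide[OF poly_DERIV poly_DERIV assms])

lemma circle_power_mult_cnj_power:
  fixes z :: complex
  assumes "cmod z = 1" "j \<le> k"
  shows "z ^ k * cnj z ^ j = z ^ (k - j)"
proof -
  have "z * cnj z = 1" using complex_norm_square[of z] assms(1) by simp
  moreover have "z ^ k * cnj z ^ j = z ^ (k - j) * (z * cnj z) ^ j"
    using assms(2) by (simp add: power_mult_distrib power_add[symmetric] mult_ac)
  ultimately show ?thesis by simp
qed

lemma Kker_diag: "Kker \<mu> n z z = of_real (\<Sum>i<n. (cmod (poly (oOP \<mu> i) z))\<^sup>2)"
  unfolding Kker_def of_real_sum by (intro sum.cong refl) (simp only: complex_norm_square)

lemma degree_szego_step:
  assumes "degree p = k" "coeff p k = 1"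
  shows "degree (pCons 0 p - smult c (star_poly k p)) = Suc k"
    and "coeff (pCons 0 p - smult c (star_poly k p)) (Suc k) = 1"
proof -
  show lc: "coeff (pCons 0 p - smult c (star_poly k p)) (Suc k) = 1"
    using assms by (simp add: coeff_star_poly)
  have "degree (pCons 0 p - smult c (star_poly k p)) \<le> Suc k"
    using assms by (intro degree_le) (auto simp: coeff_star_poly coeff_pCons coeff_eq_0 split: nat.split)
  moreover have "Suc k \<le> degree (pCons 0 p - smult c (star_poly k p))"
    using lc by (intro le_degree) simp
  ultimately show "degree (pCons 0 p - smult c (star_poly k p)) = Suc k" by simp
qed

lemma star_poly_szego_step:
  assumes "degree p \<le> k"
  shows "star_poly (Suc k) (pCons 0 p - smult c (star_poly k p)) = star_poly k p - smult c (pCons 0 p)"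
  unfolding star_poly_diff star_poly_Suc_pCons_0 star_poly_smult
  by (simp add: star_poly_Suc[OF degree_star_poly_le] star_poly_star_poly[OF assms])

text \<open>\<open>szego_coeff \<mu> k p\<close> is the Verblunsky coefficient: the \<open>c\<close> making \<open>z p - c p\<^sup>*\<close>
  orthogonal to the constants.\<close>

definition szego_coeff :: "complex measure \<Rightarrow> nat \<Rightarrow> complex poly \<Rightarrow> complex" where
  "szego_coeff \<mu> k p = (LINT z|\<mu>. z * poly p z) / (LINT z|\<mu>. poly (star_poly k p) z)"

fun szego_poly :: "complex measure \<Rightarrow> nat \<Rightarrow> complex poly" where
  "szego_poly \<mu> 0 = 1"
| "szego_poly \<mu> (Suc k) = pCons 0 (szego_poly \<mu> k) -
     smult (szego_coeff \<mu> k (szego_poly \<mu> k)) (star_poly k (szego_poly \<mu> k))"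

lemma integral_mult_cnj_self:
  "(LINT z|M. f z * cnj (f z)) = of_real (LINT z|M. (cmod (f z))\<^sup>2)"
proof -
  have "(LINT z|M. f z * cnj (f z)) = (LINT z|M. complex_of_real ((cmod (f z))\<^sup>2))"
    by (simp only: complex_norm_square)
  also have "\<dots> = of_real (LINT z|M. (cmod (f z))\<^sup>2)" by (rule integral_complex_of_real)
  finally show ?thesis .
qed

lemma poly_pderiv_at_root:
  fixes q :: "'a::idom poly"
  assumes "p = [:-a, 1:] * q"
  shows "poly (pderiv p) a = poly q a"
  unfolding assms pderiv_mult by (simp add: pderiv_pCons)

locale symmetric_circle_measure =
  fixes \<mu> :: "complex measure"
  assumes prob: "prob_space \<mu>" and sets_eq: "sets \<mu> = sets borel"
    and on_circle: "AE z in \<mu>. z \<in> sphere 0 1"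
    and cnj_invariant: "distr \<mu> borel cnj = \<mu>"
    and infinite_support: "infinite (msupport \<mu>)"
begin

lemma borel_measurable_continuous: "continuous_on UNIV f \<Longrightarrow> f \<in> borel_measurable \<mu>"
  using borel_measurable_continuous_onI measurable_cong_sets[OF sets_eq refl] by blast

lemma integrable_continuous:
  fixes f :: "complex \<Rightarrow> 'b::{banach, second_countable_topology}"
  assumes "continuous_on UNIV f"
  shows "integrable \<mu> f"
proof -
  have "compact (f ` sphere 0 1)"
    by (rule compact_continuous_image) (use assms continuous_on_subset in auto)
  then obtain B where B: "\<forall>y\<in>f ` sphere 0 1. norm y \<le> B"
    using compact_imp_bounded bounded_pos by metis
  show ?thesis
  proof (rule finite_measure.integrable_const_bound)
    show "finite_measure \<mu>" using prob by (simp add: prob_space_def)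
    show "f \<in> borel_measurable \<mu>" using borel_measurable_continuous assms .
    show "AE x in \<mu>. norm (f x) \<le> B"
      using on_circle by eventually_elim (use B in auto)
  qed
qed

lemma integral_cong_circle:
  fixes f g :: "complex \<Rightarrow> 'b::{banach, second_countable_topology}"
  assumes "continuous_on UNIV f" "continuous_on UNIV g" "\<And>z. cmod z = 1 \<Longrightarrow> f z = g z"
  shows "integral\<^sup>L \<mu> f = integral\<^sup>L \<mu> g"
  by (rule integral_cong_AE)
    (use borel_measurable_continuous assms on_circle in \<open>auto elim!: AE_mp\<close>)

lemma integral_cnj_reflect:
  fixes f :: "complex \<Rightarrow> 'b::{banach, second_countable_topology}"
  assumes "continuous_on UNIV f"
  shows "(LINT z|\<mu>. f (cnj z)) = integral\<^sup>L \<mu> f"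
proof -
  have "cnj \<in> measurable \<mu> borel"
    using borel_measurable_continuous[of cnj] by (auto intro!: continuous_intros)
  moreover have "f \<in> borel_measurable borel"
    using assms borel_measurable_continuous_onI by blast
  ultimately have "integral\<^sup>L (distr \<mu> borel cnj) f = (LINT z|\<mu>. f (cnj z))"
    by (rule integral_distr)
  thus ?thesis using cnj_invariant by simp
qed

lemma msupport_subset_closed:
  assumes "closed C" "AE z in \<mu>. z \<in> C"
  shows "msupport \<mu> \<subseteq> C"
proof
  fix x assume x: "x \<in> msupport \<mu>"
  show "x \<in> C"
  proof (rule ccontr)
    assume "x \<notin> C"
    then obtain e where e: "e > 0" "ball x e \<subseteq> - C"
      using assms(1) open_contains_ball by (metis open_Compl ComplI)
    from assms(2) obtain N where N: "{z \<in> space \<mu>. z \<notin> C} \<subseteq> N" "emeasure \<mu> N = 0" "N \<in> sets \<mu>"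
      by (rule AE_E)
    have "ball x e \<in> sets \<mu>" using sets_eq by simp
    hence "ball x e \<subseteq> N" using e N(1) sets.sets_into_space by blast
    hence "emeasure \<mu> (ball x e) = 0" using N(2,3) emeasure_mono[of "ball x e" N \<mu>] by simp
    with x e show False unfolding msupport_def by auto
  qed
qed

text \<open>A nonzero polynomial vanishes only on a finite set, which cannot carry the
  infinite support of \<open>\<mu>\<close>.\<close>

lemma integral_norm_poly_pos:
  fixes p :: "complex poly"
  assumes "p \<noteq> 0"
  shows "(LINT z|\<mu>. (cmod (poly p z))\<^sup>2) > 0"
proof (rule ccontr)
  assume "\<not> ?thesis"
  moreover have "(LINT z|\<mu>. (cmod (poly p z))\<^sup>2) \<ge> 0" by (rule integral_nonneg_AE) auto
  ultimately have "(LINT z|\<mu>. (cmod (poly p z))\<^sup>2) = 0" by linarith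
  moreover have "integrable \<mu> (\<lambda>z. (cmod (poly p z))\<^sup>2)"
    by (rule integrable_continuous) (auto intro!: continuous_intros)
  ultimately have "AE z in \<mu>. (cmod (poly p z))\<^sup>2 = 0"
    by (subst (asm) integral_nonneg_eq_0_iff_AE) auto
  hence "AE z in \<mu>. z \<in> {x. poly p x = 0}" by simp
  moreover have "finite {x. poly p x = 0}" using poly_roots_finite[OF assms] .
  ultimately have "finite (msupport \<mu>)"
    using msupport_subset_closed finite_imp_closed finite_subset by metis
  with infinite_support show False by contradiction
qed

lemma integral_mult_cnj_poly:
  assumes "continuous_on UNIV f" "degree q \<le> m"
  shows "(LINT z|\<mu>. f z * cnj (poly q z)) = (\<Sum>j\<le>m. cnj (coeff q j) * (LINT z|\<mu>. f z * cnj z ^ j))"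
proof -
  have "(LINT z|\<mu>. f z * cnj (poly q z)) = (LINT z|\<mu>. (\<Sum>j\<le>m. cnj (coeff q j) * (f z * cnj z ^ j)))"
    using assms(2)
    by (intro Bochner_Integration.integral_cong)
      (simp_all add: poly_altdef sum.mono_neutral_left coeff_eq_0 sum_distrib_left mult_ac cnj_sum)
  also have "\<dots> = (\<Sum>j\<le>m. LINT z|\<mu>. cnj (coeff q j) * (f z * cnj z ^ j))"
    by (rule Bochner_Integration.integral_sum)
      (intro integrable_continuous continuous_intros assms)
  finally show ?thesis by simp
qed

lemma integral_mult_cnj_poly_eq_0:
  assumes "\<forall>j<k. (LINT z|\<mu>. poly p z * cnj z ^ j) = 0" "degree q \<le> k" "coeff q k = 0"
  shows "(LINT z|\<mu>. poly p z * cnj (poly q z)) = 0"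
  using assms
  by (subst integral_mult_cnj_poly[where m = k])
    (auto intro!: continuous_intros sum.neutral simp: le_less)

lemma integral_mult_cnj_star_poly:
  assumes "continuous_on UNIV f" "is_monic_OP \<mu> k p"
    and "\<And>j. 1 \<le> j \<Longrightarrow> j \<le> k \<Longrightarrow> (LINT z|\<mu>. f z * cnj z ^ j) = 0"
  shows "(LINT z|\<mu>. f z * cnj (poly (star_poly k p) z)) = integral\<^sup>L \<mu> f"
proof -
  have lc: "coeff p k = 1" using assms(2) unfolding is_monic_OP_def by auto
  have "(LINT z|\<mu>. f z * cnj (poly (star_poly k p) z)) =
        (\<Sum>j\<le>k. cnj (coeff (star_poly k p) j) * (LINT z|\<mu>. f z * cnj z ^ j))"
    by (rule integral_mult_cnj_poly[OF assms(1) degree_star_poly_le])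
  also have "\<dots> = cnj (coeff (star_poly k p) 0) * (LINT z|\<mu>. f z * cnj z ^ 0) +
        (\<Sum>i<k. cnj (coeff (star_poly k p) (Suc i)) * (LINT z|\<mu>. f z * cnj z ^ Suc i))"
    by (rule sum.atMost_shift)
  also have "(\<Sum>i<k. cnj (coeff (star_poly k p) (Suc i)) * (LINT z|\<mu>. f z * cnj z ^ Suc i)) = 0"
    by (intro sum.neutral ballI mult_eq_0_iff[THEN iffD2] disjI2 assms(3)) auto
  also have "cnj (coeff (star_poly k p) 0) * (LINT z|\<mu>. f z * cnj z ^ 0) + 0 = integral\<^sup>L \<mu> f"
    using lc by (simp add: coeff_0_star_poly)
  finally show ?thesis .
qed

lemma star_poly_orthogonal:
  assumes OP: "is_monic_OP \<mu> k p" and real: "has_real_coeffs p" and j: "1 \<le> j" "j \<le> k"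
  shows "(LINT z|\<mu>. poly (star_poly k p) z * cnj z ^ j) = 0"
proof -
  have "(LINT z|\<mu>. poly (star_poly k p) z * cnj z ^ j) = (LINT z|\<mu>. cnj (poly p z * cnj z ^ (k - j)))"
  proof (rule integral_cong_circle)
    fix z :: complex assume z: "cmod z = 1"
    have "poly (star_poly k p) z = z ^ k * cnj (poly p z)"
      using poly_star_poly_on_circle[OF z _ real] OP unfolding is_monic_OP_def by simp
    thus "poly (star_poly k p) z * cnj z ^ j = cnj (poly p z * cnj z ^ (k - j))"
      using circle_power_mult_cnj_power[OF z j(2)] by (simp add: mult_ac)
  qed (auto intro!: continuous_intros)
  also have "\<dots> = cnj (LINT z|\<mu>. poly p z * cnj z ^ (k - j))"
    by (rule Bochner_Integration.integral_cnj)
  also have "\<dots> = 0" using OP j unfolding is_monic_OP_def by auto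
  finally show ?thesis .
qed

lemma shift_orthogonal:
  assumes OP: "is_monic_OP \<mu> k p" and j: "1 \<le> j" "j \<le> k"
  shows "(LINT z|\<mu>. z * poly p z * cnj z ^ j) = 0"
proof -
  have "(LINT z|\<mu>. z * poly p z * cnj z ^ j) = (LINT z|\<mu>. poly p z * cnj z ^ (j - 1))"
  proof (rule integral_cong_circle)
    fix z :: complex assume z: "cmod z = 1"
    have "z * cnj z ^ j = z ^ 1 * cnj z ^ j" by simp
    also have "\<dots> = cnj z ^ (j - 1) * (z * cnj z)"
      using j(1) by (simp add: power_Suc[symmetric] mult_ac)
    also have "z * cnj z = 1" using complex_norm_square[of z] z by simp
    finally show "z * poly p z * cnj z ^ j = poly p z * cnj z ^ (j - 1)" by (simp add: mult_ac)
  qed (auto intro!: continuous_intros)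
  also have "\<dots> = 0" using OP j unfolding is_monic_OP_def by simp
  finally show ?thesis .
qed

lemma integral_star_poly:
  assumes OP: "is_monic_OP \<mu> k p" and real: "has_real_coeffs p"
  shows "(LINT z|\<mu>. poly (star_poly k p) z) = of_real (LINT z|\<mu>. (cmod (poly p z))\<^sup>2)"
proof -
  have "(LINT z|\<mu>. poly (star_poly k p) z) =
        (LINT z|\<mu>. poly (star_poly k p) z * cnj (poly (star_poly k p) z))"
    by (rule integral_mult_cnj_star_poly[OF _ OP, symmetric])
      (use star_poly_orthogonal[OF OP real] in \<open>auto intro!: continuous_intros\<close>)
  also have "\<dots> = of_real (LINT z|\<mu>. (cmod (poly (star_poly k p) z))\<^sup>2)"
    by (rule integral_mult_cnj_self)
  also have "(LINT z|\<mu>. (cmod (poly (star_poly k p) z))\<^sup>2) = (LINT z|\<mu>. (cmod (poly p z))\<^sup>2)"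
  proof (rule integral_cong_circle)
    fix z :: complex assume z: "cmod z = 1"
    show "(cmod (poly (star_poly k p) z))\<^sup>2 = (cmod (poly p z))\<^sup>2"
      using poly_star_poly_on_circle[OF z _ real] OP z
      unfolding is_monic_OP_def by (simp add: norm_mult norm_power)
  qed (auto intro!: continuous_intros)
  finally show ?thesis .
qed

lemma integral_shift_real:
  assumes "has_real_coeffs p"
  shows "cnj (LINT z|\<mu>. z * poly p z) = (LINT z|\<mu>. z * poly p z)"
proof -
  have "cnj (LINT z|\<mu>. z * poly p z) = (LINT z|\<mu>. cnj (z * poly p z))"
    by (rule Bochner_Integration.integral_cnj[symmetric])
  also have "\<dots> = (LINT z|\<mu>. cnj z * poly p (cnj z))"
    by (simp add: poly_cnj_real_coeffs[OF assms])
  also have "\<dots> = (LINT z|\<mu>. z * poly p z)"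
    by (rule integral_cnj_reflect[where f = "\<lambda>z. z * poly p z"]) (auto intro!: continuous_intros)
  finally show ?thesis .
qed

lemma monic_OP_unique:
  assumes p: "is_monic_OP \<mu> k p" and q: "is_monic_OP \<mu> k q"
  shows "p = q"
proof -
  have "(LINT z|\<mu>. poly (p - q) z * cnj z ^ j) = 0" if "j < k" for j
  proof -
    have "(LINT z|\<mu>. poly (p - q) z * cnj z ^ j) =
          (LINT z|\<mu>. poly p z * cnj z ^ j - poly q z * cnj z ^ j)"
      by (simp add: algebra_simps)
    also have "\<dots> = (LINT z|\<mu>. poly p z * cnj z ^ j) - (LINT z|\<mu>. poly q z * cnj z ^ j)"
      by (rule Bochner_Integration.integral_diff) (auto intro!: integrable_continuous continuous_intros)
    finally have "(LINT z|\<mu>. poly (p - q) z * cnj z ^ j) =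
          (LINT z|\<mu>. poly p z * cnj z ^ j) - (LINT z|\<mu>. poly q z * cnj z ^ j)" .
    thus ?thesis using that p q unfolding is_monic_OP_def by simp
  qed
  moreover have "degree (p - q) \<le> k" "coeff (p - q) k = 0"
    using p q unfolding is_monic_OP_def by (auto intro: degree_diff_le)
  ultimately have "(LINT z|\<mu>. poly (p - q) z * cnj (poly (p - q) z)) = 0"
    by (intro integral_mult_cnj_poly_eq_0) auto
  hence "(LINT z|\<mu>. (cmod (poly (p - q) z))\<^sup>2) = 0"
    unfolding integral_mult_cnj_self by simp
  hence "p - q = 0" using integral_norm_poly_pos[of "p - q"] by (cases "p - q = 0") auto
  thus ?thesis by simp
qed

lemma integral_szego_step:
  assumes "continuous_on UNIV g"
  shows "(LINT z|\<mu>. poly (pCons 0 p - smult c (star_poly k p)) z * g z) =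
         (LINT z|\<mu>. z * poly p z * g z) - c * (LINT z|\<mu>. poly (star_poly k p) z * g z)"
proof -
  have "(LINT z|\<mu>. poly (pCons 0 p - smult c (star_poly k p)) z * g z) =
        (LINT z|\<mu>. z * poly p z * g z - c * (poly (star_poly k p) z * g z))"
    by (simp add: algebra_simps)
  also have "\<dots> = (LINT z|\<mu>. z * poly p z * g z) - (LINT z|\<mu>. c * (poly (star_poly k p) z * g z))"
    by (rule Bochner_Integration.integral_diff)
      (auto intro!: integrable_continuous continuous_intros assms)
  finally show ?thesis by simp
qed

lemma integral_star_poly_nonzero:
  assumes "is_monic_OP \<mu> k p" "has_real_coeffs p"
  shows "(LINT z|\<mu>. poly (star_poly k p) z) \<noteq> 0"
proof -
  have "p \<noteq> 0" using assms(1) unfolding is_monic_OP_def by auto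
  hence "(LINT z|\<mu>. (cmod (poly p z))\<^sup>2) > 0" by (rule integral_norm_poly_pos)
  thus ?thesis using integral_star_poly[OF assms] by simp
qed

lemma szego_coeff_real:
  assumes "is_monic_OP \<mu> k p" "has_real_coeffs p"
  shows "cnj (szego_coeff \<mu> k p) = szego_coeff \<mu> k p"
  using integral_shift_real[OF assms(2)] integral_star_poly[OF assms]
  unfolding szego_coeff_def by simp

lemma monic_OP_szego_step:
  assumes OP: "is_monic_OP \<mu> k p" and real: "has_real_coeffs p"
  shows "is_monic_OP \<mu> (Suc k) (pCons 0 p - smult (szego_coeff \<mu> k p) (star_poly k p))"
proof -
  let ?a = "szego_coeff \<mu> k p"
  have "(LINT z|\<mu>. poly (pCons 0 p - smult ?a (star_poly k p)) z * cnj z ^ j) = 0"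
    if "j < Suc k" for j
  proof -
    have "(LINT z|\<mu>. poly (pCons 0 p - smult ?a (star_poly k p)) z * cnj z ^ j) =
          (LINT z|\<mu>. z * poly p z * cnj z ^ j) - ?a * (LINT z|\<mu>. poly (star_poly k p) z * cnj z ^ j)"
      by (rule integral_szego_step) (auto intro!: continuous_intros)
    also have "\<dots> = 0"
    proof (cases "j = 0")
      case True
      thus ?thesis using integral_star_poly_nonzero[OF OP real] unfolding szego_coeff_def by simp
    next
      case False
      thus ?thesis using that shift_orthogonal[OF OP] star_poly_orthogonal[OF OP real] by simp
    qed
    finally show ?thesis .
  qed
  moreover have "degree p = k" "coeff p k = 1" using OP unfolding is_monic_OP_def by auto
  ultimately show ?thesis
    unfolding is_monic_OP_def using degree_szego_step[of p k ?a] by simp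
qed

abbreviation "\<Phi> \<equiv> szego_poly \<mu>"
abbreviation "\<alpha> k \<equiv> szego_coeff \<mu> k (\<Phi> k)"
abbreviation "sqnorm k \<equiv> LINT z|\<mu>. (cmod (poly (\<Phi> k) z))\<^sup>2"

lemma szego_poly_monic_OP: "is_monic_OP \<mu> k (\<Phi> k) \<and> has_real_coeffs (\<Phi> k)"
proof (induction k)
  case 0
  show ?case unfolding is_monic_OP_def by (simp add: has_real_coeffs_1)
next
  case (Suc k)
  then have "is_monic_OP \<mu> k (\<Phi> k)" "has_real_coeffs (\<Phi> k)" by auto
  thus ?case unfolding szego_poly.simps(2)
    by (intro conjI monic_OP_szego_step has_real_coeffs_szego_step szego_coeff_real)
qed

lemma degree_szego_poly: "degree (\<Phi> k) = k"
  and coeff_szego_poly_top: "coeff (\<Phi> k) k = 1"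
  using szego_poly_monic_OP[of k] unfolding is_monic_OP_def by auto

lemma mOP_eq_szego_poly: "mOP \<mu> k = \<Phi> k"
  unfolding mOP_def
  by (rule the_equality) (use szego_poly_monic_OP monic_OP_unique in auto)

lemma szego_coeff_of_real: "\<alpha> k = of_real (Re (\<alpha> k))"
  using szego_coeff_real[of k "\<Phi> k"] szego_poly_monic_OP[of k]
  by (metis complex_cnj_cancel_iff complex_is_Real_iff Reals_cnj_iff of_real_Re)

lemma sqnorm_pos: "sqnorm k > 0"
  by (rule integral_norm_poly_pos) (metis coeff_0 coeff_szego_poly_top zero_neq_one)

lemma integral_shift_szego: "(LINT z|\<mu>. z * poly (\<Phi> k) z) = \<alpha> k * of_real (sqnorm k)"
  using integral_star_poly[of k "\<Phi> k"] szego_poly_monic_OP[of k] sqnorm_pos[of k]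
  unfolding szego_coeff_def by simp

lemma integral_shift_cnj_shift:
  assumes "continuous_on UNIV f"
  shows "(LINT z|\<mu>. z * f z * cnj (z * f z)) = of_real (LINT z|\<mu>. (cmod (f z))\<^sup>2)"
proof -
  have "(LINT z|\<mu>. (cmod (z * f z))\<^sup>2) = (LINT z|\<mu>. (cmod (f z))\<^sup>2)"
    by (rule integral_cong_circle) (auto intro!: continuous_intros assms simp: norm_mult)
  thus ?thesis using integral_mult_cnj_self[of \<mu> "\<lambda>z. z * f z"] by simp
qed

lemma integral_star_cnj_shift:
  "(LINT z|\<mu>. poly (star_poly k (\<Phi> k)) z * cnj (z * poly (\<Phi> k) z)) = \<alpha> k * of_real (sqnorm k)"
proof -
  have OP: "is_monic_OP \<mu> k (\<Phi> k)" using szego_poly_monic_OP by blast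
  have "(LINT z|\<mu>. z * poly (\<Phi> k) z * cnj (poly (star_poly k (\<Phi> k)) z)) = \<alpha> k * of_real (sqnorm k)"
    using integral_shift_szego[of k] shift_orthogonal[OF OP]
    by (subst integral_mult_cnj_star_poly[OF _ OP]) (auto intro!: continuous_intros)
  moreover have "(LINT z|\<mu>. poly (star_poly k (\<Phi> k)) z * cnj (z * poly (\<Phi> k) z)) =
        cnj (LINT z|\<mu>. z * poly (\<Phi> k) z * cnj (poly (star_poly k (\<Phi> k)) z))"
    by (simp flip: Bochner_Integration.integral_cnj add: mult.commute)
  ultimately show ?thesis using szego_coeff_real[of k "\<Phi> k"] szego_poly_monic_OP[of k] by simp
qed

text \<open>\<open>\<Phi>\<^sub>k\<^sub>+\<^sub>1\<close> is orthogonal to \<open>\<Phi>\<^sub>k\<^sup>*\<close>, so \<open>\<parallel>\<Phi>\<^sub>k\<^sub>+\<^sub>1\<parallel>\<^sup>2 = \<langle>\<Phi>\<^sub>k\<^sub>+\<^sub>1, z \<Phi>\<^sub>k\<rangle> = \<parallel>\<Phi>\<^sub>k\<parallel>\<^sup>2 - \<alpha>\<^sub>k \<langle>\<Phi>\<^sub>k\<^sup>*, z \<Phi>\<^sub>k\<rangle>\<close>.\<close>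

lemma sqnorm_Suc: "sqnorm (Suc k) = (1 - (Re (\<alpha> k))\<^sup>2) * sqnorm k"
proof -
  define r where "r = Re (\<alpha> k)"
  have ar: "\<alpha> k = of_real r" unfolding r_def by (rule szego_coeff_of_real)
  have next_star: "(LINT z|\<mu>. poly (\<Phi> (Suc k)) z * cnj (poly (star_poly k (\<Phi> k)) z)) = 0"
    using szego_poly_monic_OP[of "Suc k"] degree_star_poly_le[of k "\<Phi> k"]
    by (intro integral_mult_cnj_poly_eq_0[where k = "Suc k"])
      (auto simp: is_monic_OP_def coeff_star_poly)
  have "of_real (sqnorm (Suc k)) = (LINT z|\<mu>. poly (\<Phi> (Suc k)) z * cnj (poly (\<Phi> (Suc k)) z))"
    by (rule integral_mult_cnj_self[symmetric])
  also have "\<dots> = (LINT z|\<mu>. poly (\<Phi> (Suc k)) z * cnj (z * poly (\<Phi> k) z)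
                      - \<alpha> k * (poly (\<Phi> (Suc k)) z * cnj (poly (star_poly k (\<Phi> k)) z)))"
    using ar by (simp add: algebra_simps)
  also have "\<dots> = (LINT z|\<mu>. poly (\<Phi> (Suc k)) z * cnj (z * poly (\<Phi> k) z))"
    using next_star
    by (subst Bochner_Integration.integral_diff) (auto intro!: integrable_continuous continuous_intros)
  also have "\<dots> = (LINT z|\<mu>. z * poly (\<Phi> k) z * cnj (z * poly (\<Phi> k) z))
                    - \<alpha> k * (LINT z|\<mu>. poly (star_poly k (\<Phi> k)) z * cnj (z * poly (\<Phi> k) z))"
    unfolding szego_poly.simps(2) by (rule integral_szego_step) (auto intro!: continuous_intros)
  also have "\<dots> = of_real (sqnorm k) - \<alpha> k * (\<alpha> k * of_real (sqnorm k))"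
    unfolding integral_star_cnj_shift
    by (subst integral_shift_cnj_shift[where f = "poly (\<Phi> k)"]) (auto intro!: continuous_intros)
  also have "\<dots> = of_real ((1 - r\<^sup>2) * sqnorm k)"
    unfolding ar by (simp add: algebra_simps power2_eq_square)
  finally show ?thesis unfolding r_def of_real_eq_iff .
qed

lemma szego_coeff_sq_less_1: "(Re (\<alpha> k))\<^sup>2 < 1"
  using sqnorm_Suc[of k] sqnorm_pos[of k] sqnorm_pos[of "Suc k"]
  by (smt (verit) mult_nonpos_nonneg)

lemma norm_szego_coeff_less_1: "cmod (\<alpha> k) < 1"
  using szego_coeff_sq_less_1[of k] by (subst szego_coeff_of_real) (simp add: abs_square_less_1)

lemma kappa_sq: "(kappa \<mu> k)\<^sup>2 = 1 / sqnorm k"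
  unfolding kappa_def mOP_eq_szego_poly using sqnorm_pos[of k] by (simp add: power_divide)

lemma kappa_pos: "kappa \<mu> k > 0"
  unfolding kappa_def mOP_eq_szego_poly using sqnorm_pos[of k] by simp

lemma kappa_sq_Suc: "(kappa \<mu> k)\<^sup>2 = (kappa \<mu> (Suc k))\<^sup>2 * (1 - (Re (\<alpha> k))\<^sup>2)"
  using sqnorm_Suc[of k] sqnorm_pos[of k] sqnorm_pos[of "Suc k"]
  unfolding kappa_sq by (simp add: field_simps)

lemma oOP_eq: "oOP \<mu> k = smult (of_real (kappa \<mu> k)) (\<Phi> k)"
  unfolding oOP_def mOP_eq_szego_poly ..

lemma Kker_eq:
  "Kker \<mu> n z w = (\<Sum>i<n. of_real ((kappa \<mu> i)\<^sup>2) * (poly (\<Phi> i) z * cnj (poly (\<Phi> i) w)))"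
  unfolding Kker_def oOP_eq by (intro sum.cong refl) (simp add: power2_eq_square)

lemma Kker_diag_pos: "Re (Kker \<mu> (Suc m) z z) > 0"
proof -
  have "(kappa \<mu> 0)\<^sup>2 \<le> (\<Sum>i<Suc m. (cmod (poly (oOP \<mu> i) z))\<^sup>2)"
    using member_le_sum[of 0 "{..<Suc m}" "\<lambda>i. (cmod (poly (oOP \<mu> i) z))\<^sup>2"]
    by (simp add: oOP_eq)
  moreover have "(kappa \<mu> 0)\<^sup>2 > 0" using kappa_pos[of 0] by simp
  ultimately have "(\<Sum>i<Suc m. (cmod (poly (oOP \<mu> i) z))\<^sup>2) > 0" by linarith
  thus ?thesis unfolding Kker_diag Re_complex_of_real .
qed

lemma poly_star_szego_Suc:
  "poly (star_poly (Suc k) (\<Phi> (Suc k))) z = poly (star_poly k (\<Phi> k)) z - \<alpha> k * (z * poly (\<Phi> k) z)"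
  unfolding szego_poly.simps(2) star_poly_szego_step[OF eq_refl[OF degree_szego_poly]] by simp

theorem christoffel_darboux:
  "Kker \<mu> (Suc k) z w * (1 - cnj w * z) = of_real ((kappa \<mu> k)\<^sup>2) *
     (poly (star_poly k (\<Phi> k)) z * cnj (poly (star_poly k (\<Phi> k)) w)
      - z * poly (\<Phi> k) z * (cnj w * cnj (poly (\<Phi> k) w)))"
proof (induction k)
  case 0
  show ?case by (simp add: Kker_eq star_poly_def algebra_simps)
next
  case (Suc k)
  have step_identity: "(K + \<kappa>' * ((Y - r * X) * (Y' - r * X'))) * (1 - c) =
      \<kappa>' * ((X - r * Y) * (X' - r * Y') - c * ((Y - r * X) * (Y' - r * X')))"
    if "\<kappa> = \<kappa>' * (1 - r * r)" "K * (1 - c) = \<kappa> * (X * X' - Y * Y')"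
    for K X X' Y Y' c r \<kappa> \<kappa>' :: complex
    using that by algebra
  define r where "r = Re (\<alpha> k)"
  have ar: "\<alpha> k = of_real r" unfolding r_def by (rule szego_coeff_of_real)
  have kr: "complex_of_real ((kappa \<mu> k)\<^sup>2) = of_real ((kappa \<mu> (Suc k))\<^sup>2) * (1 - of_real r * of_real r)"
    using kappa_sq_Suc[of k] unfolding r_def[symmetric] by (simp add: power2_eq_square)
  have Kker_Suc: "Kker \<mu> (Suc (Suc k)) z w = Kker \<mu> (Suc k) z w +
      of_real ((kappa \<mu> (Suc k))\<^sup>2) * (poly (\<Phi> (Suc k)) z * cnj (poly (\<Phi> (Suc k)) w))"
    unfolding Kker_eq by simp
  have poly_Suc: "poly (\<Phi> (Suc k)) u = u * poly (\<Phi> k) u - \<alpha> k * poly (star_poly k (\<Phi> k)) u" for u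
    by simp
  have "Kker \<mu> (Suc (Suc k)) z w * (1 - cnj w * z) =
      (Kker \<mu> (Suc k) z w + of_real ((kappa \<mu> (Suc k))\<^sup>2) *
        ((z * poly (\<Phi> k) z - of_real r * poly (star_poly k (\<Phi> k)) z) *
         (cnj w * cnj (poly (\<Phi> k) w) - of_real r * cnj (poly (star_poly k (\<Phi> k)) w)))) * (1 - cnj w * z)"
    unfolding Kker_Suc poly_Suc ar by simp
  also have "\<dots> = of_real ((kappa \<mu> (Suc k))\<^sup>2) *
      ((poly (star_poly k (\<Phi> k)) z - of_real r * (z * poly (\<Phi> k) z)) *
       (cnj (poly (star_poly k (\<Phi> k)) w) - of_real r * (cnj w * cnj (poly (\<Phi> k) w)))
       - (cnj w * z) * ((z * poly (\<Phi> k) z - of_real r * poly (star_poly k (\<Phi> k)) z) *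
       (cnj w * cnj (poly (\<Phi> k) w) - of_real r * cnj (poly (star_poly k (\<Phi> k)) w))))"
    by (rule step_identity[OF kr]) (use Suc.IH in \<open>simp add: mult_ac\<close>)
  also have "\<dots> = of_real ((kappa \<mu> (Suc k))\<^sup>2) *
      (poly (star_poly (Suc k) (\<Phi> (Suc k))) z * cnj (poly (star_poly (Suc k) (\<Phi> (Suc k))) w)
       - z * poly (\<Phi> (Suc k)) z * (cnj w * cnj (poly (\<Phi> (Suc k)) w)))"
    unfolding poly_star_szego_Suc poly_Suc ar by (simp add: algebra_simps)
  finally show ?case .
qed

lemma norm_shift_lt_norm_star:
  assumes "cmod z < 1"
  shows "cmod (z * poly (\<Phi> m) z) < cmod (poly (star_poly m (\<Phi> m)) z)"
proof -
  define K where "K = Re (Kker \<mu> (Suc m) z z)"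
  have norm_sq: "u * cnj u = complex_of_real ((cmod u)\<^sup>2)" for u :: complex
    by (rule complex_norm_square[symmetric])
  have "Kker \<mu> (Suc m) z z * (1 - z * cnj z) = of_real ((kappa \<mu> m)\<^sup>2) *
     (poly (star_poly m (\<Phi> m)) z * cnj (poly (star_poly m (\<Phi> m)) z)
      - (z * poly (\<Phi> m) z) * cnj (z * poly (\<Phi> m) z))"
    using christoffel_darboux[of m z z] by (simp add: mult_ac)
  moreover have "Kker \<mu> (Suc m) z z = of_real K" unfolding K_def Kker_diag by simp
  ultimately have "complex_of_real (K * (1 - (cmod z)\<^sup>2)) = of_real ((kappa \<mu> m)\<^sup>2 *
      ((cmod (poly (star_poly m (\<Phi> m)) z))\<^sup>2 - (cmod (z * poly (\<Phi> m) z))\<^sup>2))"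
    unfolding norm_sq by simp
  hence eq: "K * (1 - (cmod z)\<^sup>2) = (kappa \<mu> m)\<^sup>2 *
      ((cmod (poly (star_poly m (\<Phi> m)) z))\<^sup>2 - (cmod (z * poly (\<Phi> m) z))\<^sup>2)"
    using of_real_eq_iff by blast
  have "K * (1 - (cmod z)\<^sup>2) > 0"
    using Kker_diag_pos[of m z] assms unfolding K_def by (simp add: abs_square_less_1)
  hence "(cmod (poly (star_poly m (\<Phi> m)) z))\<^sup>2 - (cmod (z * poly (\<Phi> m) z))\<^sup>2 > 0"
    using eq kappa_pos[of m] by (metis zero_less_mult_pos zero_less_power)
  thus ?thesis by (simp add: power_less_imp_less_base)
qed

lemma star_minus_shift_nonzero:
  assumes "cmod z < 1" "cmod c \<le> 1"
  shows "poly (star_poly m (\<Phi> m)) z - c * poly (pCons 0 (\<Phi> m)) z \<noteq> 0"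
proof
  assume "poly (star_poly m (\<Phi> m)) z - c * poly (pCons 0 (\<Phi> m)) z = 0"
  hence "cmod (poly (star_poly m (\<Phi> m)) z) = cmod c * cmod (z * poly (\<Phi> m) z)"
    by (simp add: norm_mult)
  also have "\<dots> \<le> cmod (z * poly (\<Phi> m) z)" using assms(2) by (simp add: mult_left_le_one_le)
  finally show False using norm_shift_lt_norm_star[OF assms(1), of m] by simp
qed

lemma POP_Suc_eq: "POP \<mu> (Suc m) \<beta> = pCons 0 (\<Phi> m) - smult \<beta> (star_poly m (\<Phi> m))"
  unfolding POP_def mOP_eq_szego_poly by simp

lemma poly_POP: "poly (POP \<mu> (Suc m) \<beta>) z = z * poly (\<Phi> m) z - \<beta> * poly (star_poly m (\<Phi> m)) z"
  unfolding POP_Suc_eq by simp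

lemma degree_POP: "degree (POP \<mu> (Suc m) \<beta>) = Suc m"
  and lead_coeff_POP: "lead_coeff (POP \<mu> (Suc m) \<beta>) = 1"
  using degree_szego_step[OF degree_szego_poly coeff_szego_poly_top, where c = \<beta>]
  unfolding POP_Suc_eq by auto

lemma POP_root_on_circle:
  assumes root: "poly (POP \<mu> (Suc m) 1) \<zeta> = 0"
  shows "cmod \<zeta> = 1"
proof -
  have no_root_in_disk: "poly (POP \<mu> (Suc m) 1) w \<noteq> 0" if "cmod w < 1" for w
    using norm_shift_lt_norm_star[OF that, of m] unfolding poly_POP by auto
  have "\<not> cmod \<zeta> > 1"
  proof
    assume "cmod \<zeta> > 1"
    hence nz: "\<zeta> \<noteq> 0" and "cmod (1 / \<zeta>) < 1" by (auto simp: norm_divide divide_less_eq)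
    have "star_poly (Suc m) (POP \<mu> (Suc m) 1) = - POP \<mu> (Suc m) 1"
      using star_poly_szego_step[OF eq_refl[OF degree_szego_poly], of m 1]
      unfolding POP_Suc_eq by simp
    moreover have "poly (star_poly (Suc m) (POP \<mu> (Suc m) 1)) \<zeta> = \<zeta> ^ Suc m * poly (POP \<mu> (Suc m) 1) (1 / \<zeta>)"
      by (rule poly_star_poly[OF nz]) (simp add: degree_POP)
    ultimately have "poly (POP \<mu> (Suc m) 1) (1 / \<zeta>) = 0" using root nz by simp
    with no_root_in_disk \<open>cmod (1 / \<zeta>) < 1\<close> show False by blast
  qed
  moreover have "\<not> cmod \<zeta> < 1" using no_root_in_disk root by blast
  ultimately show ?thesis by simp
qed

lemma christoffel_darboux_at_root:
  assumes root: "poly (POP \<mu> (Suc m) 1) \<zeta> = 0"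
  shows "cnj \<zeta> * Kker \<mu> (Suc m) \<zeta> \<zeta> =
    of_real ((kappa \<mu> m)\<^sup>2) * cnj (poly (star_poly m (\<Phi> m)) \<zeta>) * poly (pderiv (POP \<mu> (Suc m) 1)) \<zeta>"
proof -
  obtain Q where Q: "POP \<mu> (Suc m) 1 = [:-\<zeta>,1:] * Q"
    using root poly_eq_0_iff_dvd by (metis dvdE)
  have unimodular: "cnj \<zeta> * \<zeta> = 1"
    using POP_root_on_circle[OF root] complex_norm_square[of \<zeta>] by (simp add: mult.commute)
  have star_at_root: "poly (star_poly m (\<Phi> m)) \<zeta> = \<zeta> * poly (\<Phi> m) \<zeta>"
    using root unfolding poly_POP by simp
  define Kp where "Kp = (\<Sum>i<Suc m. smult (of_real ((kappa \<mu> i)\<^sup>2) * cnj (poly (\<Phi> i) \<zeta>)) (\<Phi> i))"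
  have poly_Kp: "poly Kp z = Kker \<mu> (Suc m) z \<zeta>" for z
    unfolding Kp_def Kker_eq poly_sum by (intro sum.cong refl) (simp add: mult_ac)
  define R where "R = smult (cnj \<zeta>) Kp - smult (of_real ((kappa \<mu> m)\<^sup>2) * cnj (poly (star_poly m (\<Phi> m)) \<zeta>)) Q"
  have "poly ([:-\<zeta>,1:] * R) z = 0" for z
  proof -
    have "poly (POP \<mu> (Suc m) 1) z = (z - \<zeta>) * poly Q z" unfolding Q by (simp add: algebra_simps)
    hence diff_eq: "z * poly (\<Phi> m) z - poly (star_poly m (\<Phi> m)) z = (z - \<zeta>) * poly Q z"
      unfolding poly_POP by simp
    have cnj_star: "cnj (poly (star_poly m (\<Phi> m)) \<zeta>) = cnj \<zeta> * cnj (poly (\<Phi> m) \<zeta>)"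
      using star_at_root by simp
    have "1 - cnj \<zeta> * z = - cnj \<zeta> * (z - \<zeta>)" using unimodular by (simp add: algebra_simps)
    hence "Kker \<mu> (Suc m) z \<zeta> * (- cnj \<zeta> * (z - \<zeta>)) =
        - of_real ((kappa \<mu> m)\<^sup>2) * cnj (poly (star_poly m (\<Phi> m)) \<zeta>) * ((z - \<zeta>) * poly Q z)"
      using christoffel_darboux[of m z \<zeta>] unfolding diff_eq[symmetric] cnj_star
      by (simp add: algebra_simps)
    thus ?thesis unfolding R_def by (simp add: poly_Kp algebra_simps)
  qed
  hence "R = 0" using poly_all_0_iff_0 by (metis mult_eq_0_iff pCons_eq_0_iff one_neq_zero)
  hence "poly R \<zeta> = 0" by simp
  thus ?thesis unfolding R_def using poly_Kp[of \<zeta>] poly_pderiv_at_root[OF Q] by simp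
qed

lemma rsquarefree_POP: "rsquarefree (POP \<mu> (Suc m) 1)"
  unfolding rsquarefree_roots
proof (intro allI notI)
  fix \<zeta> assume double: "poly (POP \<mu> (Suc m) 1) \<zeta> = 0 \<and> poly (pderiv (POP \<mu> (Suc m) 1)) \<zeta> = 0"
  hence "cnj \<zeta> * Kker \<mu> (Suc m) \<zeta> \<zeta> = 0" using christoffel_darboux_at_root by simp
  moreover have "\<zeta> \<noteq> 0" using POP_root_on_circle[of m \<zeta>] double by auto
  moreover have "Kker \<mu> (Suc m) \<zeta> \<zeta> \<noteq> 0" using Kker_diag_pos[of m \<zeta>] by auto
  ultimately show False by simp
qed

abbreviation "pzeros m \<equiv> {\<zeta>. poly (POP \<mu> (Suc m) 1) \<zeta> = 0}"

lemma finite_pzeros: "finite (pzeros m)"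
  using lead_coeff_POP[of m 1] by (intro poly_roots_finite) auto

lemma POP_eq_prod_pzeros: "POP \<mu> (Suc m) 1 = (\<Prod>\<zeta>\<in>pzeros m. [:-\<zeta>,1:])"
  using complex_poly_decompose_rsquarefree[OF rsquarefree_POP[of m]] lead_coeff_POP[of m 1] by simp

lemma card_pzeros: "card (pzeros m) = Suc m"
proof -
  have "Suc m = degree (\<Prod>\<zeta>\<in>pzeros m. [:-\<zeta>,1::complex:])"
    using degree_POP[of m 1] POP_eq_prod_pzeros[of m] by simp
  also have "\<dots> = (\<Sum>\<zeta>\<in>pzeros m. degree [:-\<zeta>,1::complex:])" by (rule degree_prod_sum_eq) auto
  finally show ?thesis by simp
qed

lemma POP_split_at_pzero:
  "\<zeta> \<in> pzeros m \<Longrightarrow> POP \<mu> (Suc m) 1 = [:-\<zeta>,1:] * (\<Prod>j\<in>pzeros m - {\<zeta>}. [:-j,1:])"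
  using POP_eq_prod_pzeros[of m] finite_pzeros[of m] by (metis prod.remove)

lemma pderiv_POP_at_pzero:
  "\<zeta> \<in> pzeros m \<Longrightarrow> poly (pderiv (POP \<mu> (Suc m) 1)) \<zeta> = (\<Prod>j\<in>pzeros m - {\<zeta>}. \<zeta> - j)"
  by (simp add: poly_pderiv_at_root[OF POP_split_at_pzero] poly_prod)

lemma sigma_wt_at_pzero:
  assumes "\<zeta> \<in> pzeros m"
  shows "poly (star_poly m (\<Phi> m)) \<zeta> / poly (pderiv (POP \<mu> (Suc m) 1)) \<zeta> = \<zeta> * of_real (sigma_wt \<mu> (Suc m) \<zeta>)"
proof -
  have root: "poly (POP \<mu> (Suc m) 1) \<zeta> = 0" using assms by simp
  have "cmod \<zeta> = 1" by (rule POP_root_on_circle[OF root])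
  hence unimodular: "cnj \<zeta> * \<zeta> = 1" and nz: "\<zeta> \<noteq> 0"
    using complex_norm_square[of \<zeta>] by (auto simp: mult.commute)
  define D where "D = poly (pderiv (POP \<mu> (Suc m) 1)) \<zeta>"
  define A where "A = poly (star_poly m (\<Phi> m)) \<zeta>"
  define K where "K = Re (Kker \<mu> (Suc m) \<zeta> \<zeta>)"
  define k2 where "k2 = (kappa \<mu> m)\<^sup>2"
  have K_pos: "K > 0" unfolding K_def by (rule Kker_diag_pos)
  have k2_pos: "k2 > 0" unfolding k2_def using kappa_pos[of m] by simp
  have "Kker \<mu> (Suc m) \<zeta> \<zeta> = of_real K" unfolding K_def Kker_diag by simp
  hence key: "cnj \<zeta> * of_real K = of_real k2 * cnj A * D"
    using christoffel_darboux_at_root[OF root] unfolding A_def D_def k2_def by simp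
  hence "cnj A \<noteq> 0" "D \<noteq> 0" using K_pos nz by auto
  have "A = \<zeta> * poly (\<Phi> m) \<zeta>" using root unfolding A_def poly_POP by simp
  hence wt: "sigma_wt \<mu> (Suc m) \<zeta> = k2 * (cmod A)\<^sup>2 / K"
    unfolding sigma_wt_def K_def k2_def oOP_eq using \<open>cmod \<zeta> = 1\<close>
    by (simp add: norm_mult power_mult_distrib)
  have "A / D = A * (of_real k2 * cnj A) / (cnj \<zeta> * of_real K)"
    using key \<open>cnj A \<noteq> 0\<close> \<open>D \<noteq> 0\<close> k2_pos by (simp add: field_simps)
  also have "\<dots> = of_real (k2 * (cmod A)\<^sup>2) / (cnj \<zeta> * of_real K)"
    using complex_norm_square[of A] by (simp add: mult_ac)
  also have "\<dots> = \<zeta> * of_real (k2 * (cmod A)\<^sup>2 / K)"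
    using unimodular K_pos nz by (simp add: field_simps)
  finally show ?thesis unfolding A_def D_def wt .
qed

lemma sigma_wt_nonneg: "sigma_wt \<mu> (Suc m) \<zeta> \<ge> 0"
  unfolding sigma_wt_def using Kker_diag_pos[of m \<zeta>] by simp

lemma star_partial_fractions:
  assumes nz: "poly (POP \<mu> (Suc m) 1) z \<noteq> 0"
  shows "poly (star_poly m (\<Phi> m)) z =
    poly (POP \<mu> (Suc m) 1) z * (\<Sum>\<zeta>\<in>pzeros m. \<zeta> * of_real (sigma_wt \<mu> (Suc m) \<zeta>) / (z - \<zeta>))"
proof -
  have "degree (star_poly m (\<Phi> m)) < card (pzeros m)"
    using degree_star_poly_le[of m "\<Phi> m"] card_pzeros[of m] by simp
  hence "poly (star_poly m (\<Phi> m)) z = (\<Sum>\<zeta>\<in>pzeros m. poly (star_poly m (\<Phi> m)) \<zeta> /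
      (\<Prod>j\<in>pzeros m-{\<zeta>}. \<zeta> - j) * (\<Prod>j\<in>pzeros m-{\<zeta>}. z - j))"
    by (rule lagrange_interpolation[OF finite_pzeros])
  also have "\<dots> = (\<Sum>\<zeta>\<in>pzeros m. \<zeta> * of_real (sigma_wt \<mu> (Suc m) \<zeta>) * (poly (POP \<mu> (Suc m) 1) z / (z - \<zeta>)))"
  proof (intro sum.cong refl)
    fix \<zeta> assume \<zeta>: "\<zeta> \<in> pzeros m"
    have "poly (POP \<mu> (Suc m) 1) z = (z - \<zeta>) * (\<Prod>j\<in>pzeros m-{\<zeta>}. z - j)"
      using arg_cong[OF POP_split_at_pzero[OF \<zeta>], of "\<lambda>p. poly p z"]
      by (simp add: poly_prod algebra_simps)
    moreover have "z \<noteq> \<zeta>" using \<zeta> nz by auto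
    ultimately have "(\<Prod>j\<in>pzeros m-{\<zeta>}. z - j) = poly (POP \<mu> (Suc m) 1) z / (z - \<zeta>)"
      by (simp add: field_simps)
    thus "poly (star_poly m (\<Phi> m)) \<zeta> / (\<Prod>j\<in>pzeros m-{\<zeta>}. \<zeta> - j) * (\<Prod>j\<in>pzeros m-{\<zeta>}. z - j) =
      \<zeta> * of_real (sigma_wt \<mu> (Suc m) \<zeta>) * (poly (POP \<mu> (Suc m) 1) z / (z - \<zeta>))"
      using sigma_wt_at_pzero[OF \<zeta>] pderiv_POP_at_pzero[OF \<zeta>] by simp
  qed
  also have "\<dots> = poly (POP \<mu> (Suc m) 1) z * (\<Sum>\<zeta>\<in>pzeros m. \<zeta> * of_real (sigma_wt \<mu> (Suc m) \<zeta>) / (z - \<zeta>))"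
    by (simp add: sum_distrib_left field_simps)
  finally show ?thesis .
qed

lemma sum_sigma_wt: "(\<Sum>\<zeta>\<in>pzeros m. sigma_wt \<mu> (Suc m) \<zeta>) = 1"
proof -
  have star_0: "poly (star_poly m (\<Phi> m)) 0 = 1"
    by (simp add: poly_0_coeff_0 coeff_0_star_poly coeff_szego_poly_top)
  hence POP_0: "poly (POP \<mu> (Suc m) 1) 0 = -1" unfolding poly_POP by simp
  have "1 = - (\<Sum>\<zeta>\<in>pzeros m. \<zeta> * of_real (sigma_wt \<mu> (Suc m) \<zeta>) / (0 - \<zeta>))"
    using star_partial_fractions[of m 0] POP_0 star_0 by simp
  also have "\<dots> = (\<Sum>\<zeta>\<in>pzeros m. of_real (sigma_wt \<mu> (Suc m) \<zeta>))"
    unfolding sum_negf[symmetric]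
  proof (intro sum.cong refl)
    fix \<zeta> assume "\<zeta> \<in> pzeros m"
    hence "\<zeta> \<noteq> 0" using POP_root_on_circle[of m \<zeta>] by auto
    thus "- (\<zeta> * complex_of_real (sigma_wt \<mu> (Suc m) \<zeta>) / (0 - \<zeta>)) = complex_of_real (sigma_wt \<mu> (Suc m) \<zeta>)"
      by simp
  qed
  finally have "complex_of_real (\<Sum>\<zeta>\<in>pzeros m. sigma_wt \<mu> (Suc m) \<zeta>) = 1" by simp
  thus ?thesis using of_real_eq_1_iff by blast
qed

lemma Ffun_eq_sum:
  assumes "cmod z < 1"
  shows "Ffun \<mu> (Suc m) z = (\<Sum>\<zeta>\<in>pzeros m. complex_of_real (sigma_wt \<mu> (Suc m) \<zeta>) * ((\<zeta> + z) / (\<zeta> - z)))"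
proof -
  have nz: "poly (POP \<mu> (Suc m) 1) z \<noteq> 0" using POP_root_on_circle[of m z] assms by auto
  define S where "S = (\<Sum>\<zeta>\<in>pzeros m. \<zeta> * of_real (sigma_wt \<mu> (Suc m) \<zeta>) / (z - \<zeta>))"
  have star: "poly (star_poly m (\<Phi> m)) z = poly (POP \<mu> (Suc m) 1) z * S"
    unfolding S_def by (rule star_partial_fractions[OF nz])
  have "Ffun \<mu> (Suc m) z = - (poly (POP \<mu> (Suc m) 1) z + 2 * poly (star_poly m (\<Phi> m)) z) / poly (POP \<mu> (Suc m) 1) z"
    unfolding Ffun_def poly_POP by (simp add: algebra_simps)
  also have "\<dots> = - 1 - 2 * S" using nz unfolding star by (simp add: field_simps)
  also have "\<dots> = (\<Sum>\<zeta>\<in>pzeros m. - complex_of_real (sigma_wt \<mu> (Suc m) \<zeta>)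
                      - 2 * (\<zeta> * of_real (sigma_wt \<mu> (Suc m) \<zeta>) / (z - \<zeta>)))"
    using sum_sigma_wt[of m] unfolding S_def
    by (simp add: sum_subtractf sum_distrib_left sum_negf flip: of_real_sum)
  also have "\<dots> = (\<Sum>\<zeta>\<in>pzeros m. complex_of_real (sigma_wt \<mu> (Suc m) \<zeta>) * ((\<zeta> + z) / (\<zeta> - z)))"
  proof (intro sum.cong refl)
    fix \<zeta> assume "\<zeta> \<in> pzeros m"
    hence "\<zeta> \<noteq> z" using nz by auto
    thus "- complex_of_real (sigma_wt \<mu> (Suc m) \<zeta>) - 2 * (\<zeta> * of_real (sigma_wt \<mu> (Suc m) \<zeta>) / (z - \<zeta>)) =
          complex_of_real (sigma_wt \<mu> (Suc m) \<zeta>) * ((\<zeta> + z) / (\<zeta> - z))"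
      by (simp add: field_simps)
  qed
  finally show ?thesis .
qed

lemma bfun_eq:
  "bfun \<mu> (Suc m) u = (poly (pCons 0 (\<Phi> m)) u - \<alpha> m * poly (star_poly m (\<Phi> m)) u) /
                       (poly (star_poly m (\<Phi> m)) u - \<alpha> m * poly (pCons 0 (\<Phi> m)) u)"
proof -
  have "complex_of_real (kappa \<mu> (Suc m)) \<noteq> 0" using kappa_pos[of "Suc m"] by simp
  hence "bfun \<mu> (Suc m) u = poly (\<Phi> (Suc m)) u / poly (star_poly (Suc m) (\<Phi> (Suc m))) u"
    unfolding bfun_def oOP_eq star_poly_smult by simp
  thus ?thesis unfolding poly_star_szego_Suc by simp
qed

lemma Ffun_eq:
  "Ffun \<mu> (Suc m) u = (poly (star_poly m (\<Phi> m)) u + poly (pCons 0 (\<Phi> m)) u) /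
                       (poly (star_poly m (\<Phi> m)) u - poly (pCons 0 (\<Phi> m)) u)"
proof -
  have "Ffun \<mu> (Suc m) u = - (poly (pCons 0 (\<Phi> m)) u + poly (star_poly m (\<Phi> m)) u) /
                            (poly (pCons 0 (\<Phi> m)) u - poly (star_poly m (\<Phi> m)) u)"
    unfolding Ffun_def poly_POP by simp
  thus ?thesis by (metis add.commute divide_minus_left divide_minus_right minus_diff_eq)
qed

lemma hfun_eq:
  assumes z: "cmod z < 1"
  shows "hfun \<mu> (Suc m) z = (1 - z\<^sup>2) / 2 * deriv (Ffun \<mu> (Suc m)) z / Ffun \<mu> (Suc m) z"
proof -
  define pA where "pA = star_poly m (\<Phi> m)"
  define pB where "pB = pCons 0 (\<Phi> m)"
  define c where "c = \<alpha> m"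
  have b_eq: "bfun \<mu> (Suc m) = (\<lambda>u. poly (pB - smult c pA) u / poly (pA - smult c pB) u)"
    unfolding pA_def pB_def c_def by (rule ext) (simp add: bfun_eq)
  have F_eq: "Ffun \<mu> (Suc m) = (\<lambda>u. poly (pA + pB) u / poly (pA - pB) u)"
    unfolding pA_def pB_def by (rule ext) (simp add: Ffun_eq)
  have norm_c: "cmod c < 1" unfolding c_def by (rule norm_szego_coeff_less_1)
  have c_sq: "c * c \<noteq> 1"
  proof
    assume "c * c = 1"
    hence "cmod c * cmod c = 1" by (metis norm_mult norm_one)
    moreover have "cmod c * cmod c < 1" using norm_c by (metis mult_strict_mono' mult_1 norm_ge_zero)
    ultimately show False by simp
  qed
  have nz1: "poly pA z - c * poly pB z \<noteq> 0" and nz2: "poly pA z - poly pB z \<noteq> 0"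
    and nz3: "poly pA z + poly pB z \<noteq> 0"
    using star_minus_shift_nonzero[OF z, of c m] star_minus_shift_nonzero[OF z, of 1 m]
      star_minus_shift_nonzero[OF z, of "-1" m] norm_c
    unfolding pA_def pB_def by auto
  have deriv_b: "deriv (bfun \<mu> (Suc m)) z =
      (poly (pderiv (pB - smult c pA)) z * poly (pA - smult c pB) z
       - poly (pB - smult c pA) z * poly (pderiv (pA - smult c pB)) z)
      / (poly (pA - smult c pB) z * poly (pA - smult c pB) z)"
    unfolding b_eq by (rule deriv_poly_quotient) (use nz1 in simp)
  have deriv_F: "deriv (Ffun \<mu> (Suc m)) z =
      (poly (pderiv (pA + pB)) z * poly (pA - pB) z - poly (pA + pB) z * poly (pderiv (pA - pB)) z)
      / (poly (pA - pB) z * poly (pA - pB) z)"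
    unfolding F_eq by (rule deriv_poly_quotient) (use nz2 in simp)
  show ?thesis
    unfolding hfun_def deriv_b deriv_F unfolding b_eq F_eq
    by (simp only: pderiv_diff pderiv_add pderiv_smult poly_diff poly_add poly_smult)
      (rule moebius_cayley_log_deriv_identity[OF nz1 nz2 nz3 c_sq])
qed

end

theorem proposition1p2:
  fixes \<mu> :: "complex measure" and n :: nat
  assumes "prob_space \<mu>"
    and "sets \<mu> = sets borel"
    and "AE z in \<mu>. z \<in> sphere 0 1"
    and "distr \<mu> borel cnj = \<mu>"
    and "infinite (msupport \<mu>)"
    and "n \<ge> 1"
  shows "let Z = {\<zeta>. poly (POP \<mu> n 1) \<zeta> = 0} in
    Z \<subseteq> sphere 0 1 \<and> card Z = n \<and>
    (\<forall>\<zeta>\<in>Z. sigma_wt \<mu> n \<zeta> \<ge> 0) \<and> (\<Sum>\<zeta>\<in>Z. sigma_wt \<mu> n \<zeta>) = 1 \<and>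
    (\<forall>z\<in>ball 0 1.
       Ffun \<mu> n z = (\<Sum>\<zeta>\<in>Z. complex_of_real (sigma_wt \<mu> n \<zeta>) * ((\<zeta> + z) / (\<zeta> - z))) \<and>
       hfun \<mu> n z = (1 - z\<^sup>2) / 2 * deriv (Ffun \<mu> n) z / Ffun \<mu> n z)"
proof -
  interpret symmetric_circle_measure \<mu> by (rule symmetric_circle_measure.intro[OF assms(1-5)])
  obtain m where n: "n = Suc m" using assms(6) by (cases n) auto
  show ?thesis unfolding Let_def n
    using POP_root_on_circle[of m] card_pzeros[of m] sigma_wt_nonneg[of m] sum_sigma_wt[of m]
      Ffun_eq_sum[of _ m] hfun_eq[of _ m]
    by auto
qed

end
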